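(* Let $\Sigma=(I,X,\mathcal U,\phi,Y,h)$ be a forward complete control system with outputs. If $\Sigma$ is OCAG and OUGS, then $\Sigma$ is IOS.
   Context: Let $I\in\{\mathbb N_0,\mathbb R_0^+\}$. A forward complete control system with outputs $\Sigma=(I,X,\mathcal U,\phi,Y,h)$ consists of: a normed space $(X,\|\cdot\|_X)$; a vector space $U$ and a normed linear subspace $(\mathcal U,\|\cdot\|_{\mathcal U})$ of $\{u:I\to U\}$ such that for all $u\in\mathcal U,\tau\in I$, $u(\cdot+\tau)\in\mathcal U$ with $\|u(\cdot+\tau)\|_{\mathcal U}\le\|u\|_{\mathcal U}$, and for $t_2\ge t_1\ge 0$ the function $u|_{[t_1,t_2]}$ ($u$ on $[t_1,t_2]$, $0$ elsewhere) lies in $\mathcal U$ with norm $\le\|u\|_{\mathcal U}$; a map $\phi:I\times X\times\mathcal U\to X$ with $\phi(0,x,u)=x$, causality, and cocycle property $\phi(t+s,x,u)=\phi(s,\phi(t,x,u),u(t+\cdot))$; a normed space $Y$ and $h:X\times U\to Y$. Write $y(t,x,u)=h(\phi(t,x,u),u(t))$. $\mathcal K_\infty$ and $\mathcal{KL}$ are the standard comparison function classes. OCAG: $\exists\beta\in\mathcal{KL},\gamma\in\mathcal K_\infty,c\ge0$ with $\|y(t,x,u)\|_Y\le\beta(\|x\|_X+c,t)+\gamma(\|u\|_{\mathcal U})$ for all $x\in X,u\in\mathcal U,t\in I$. OUGS: $\exists\sigma,\gamma\in\mathcal K_\infty$ with $\|y(t,x,u)\|_Y\le\sigma(\|x\|_X)+\gamma(\|u\|_{\mathcal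 U})$ for all $x,u,t$. IOS: $\exists\beta\in\mathcal{KL},\gamma\in\mathcal K_\infty$ with $\|y(t,x,u)\|_Y\le\beta(\|x\|_X,t)+\gamma(\|u\|_{\mathcal U})$ for all $x,u,t$. *)

theory Defs
  imports "HOL-Analysis.Analysis"
begin

definition class_K :: "(real \<Rightarrow> real) \<Rightarrow> bool" where
  "class_K \<gamma> \<longleftrightarrow> continuous_on {0..} \<gamma> \<and> strict_mono_on {0..} \<gamma> \<and> \<gamma> 0 = 0"

definition class_Kinf :: "(real \<Rightarrow> real) \<Rightarrow> bool" where
  "class_Kinf \<gamma> \<longleftrightarrow> class_K \<gamma> \<and> (\<forall>M. \<exists>r\<ge>0. \<gamma> r > M)"

definition class_KL :: "(real \<Rightarrow> real \<Rightarrow> real) \<Rightarrow> bool" where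
  "class_KL \<beta> \<longleftrightarrow>
     (\<forall>t\<ge>0. class_K (\<lambda>r. \<beta> r t)) \<and>
     (\<forall>r\<ge>0. antimono_on {0..} (\<lambda>t. \<beta> r t) \<and> ((\<lambda>t. \<beta> r t) \<longlongrightarrow> 0) at_top)"

text \<open>Time set TT is either the natural numbers (embedded in the reals) or [0,\<infinity>).
  Inputs are functions real \<Rightarrow> 'u that vanish outside TT (so they are exactly
  functions TT \<rightarrow> U). The input space is the set UU with norm normU.\<close>

definition time_set :: "real set \<Rightarrow> bool" where
  "time_set TT \<longleftrightarrow> TT = range real \<or> TT = {0..}"

definition shift_inp :: "real set \<Rightarrow> (real \<Rightarrow> 'u::zero) \<Rightarrow> real \<Rightarrow> real \<Rightarrow> 'u" where
  "shift_inp TT u \<tau> = (\<lambda>s. if s \<in> TT then u (s + \<tau>) else 0)"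

definition restr_inp :: "real set \<Rightarrow> (real \<Rightarrow> 'u::zero) \<Rightarrow> real \<Rightarrow> real \<Rightarrow> real \<Rightarrow> 'u" where
  "restr_inp TT u t1 t2 = (\<lambda>s. if s \<in> TT \<and> t1 \<le> s \<and> s \<le> t2 then u s else 0)"

definition fc_control_system ::
  "real set \<Rightarrow> (real \<Rightarrow> 'u::real_vector) set \<Rightarrow> ((real \<Rightarrow> 'u) \<Rightarrow> real)
   \<Rightarrow> (real \<Rightarrow> 'x::real_normed_vector \<Rightarrow> (real \<Rightarrow> 'u) \<Rightarrow> 'x) \<Rightarrow> bool" where
  "fc_control_system TT UU normU \<phi> \<longleftrightarrow>
     time_set TT \<and>
     \<comment> \<open>UU is a linear space of functions TT \<rightarrow> U\<close>
     (\<forall>u\<in>UU. \<forall>s. s \<notin> TT \<longrightarrow> u s = 0) \<and>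
     (\<lambda>_. 0) \<in> UU \<and>
     (\<forall>u\<in>UU. \<forall>v\<in>UU. (\<lambda>s. u s + v s) \<in> UU) \<and>
     (\<forall>u\<in>UU. \<forall>a::real. (\<lambda>s. a *\<^sub>R u s) \<in> UU) \<and>
     \<comment> \<open>normU is a norm on UU\<close>
     (\<forall>u\<in>UU. normU u \<ge> 0) \<and>
     (\<forall>u\<in>UU. normU u = 0 \<longleftrightarrow> u = (\<lambda>_. 0)) \<and>
     (\<forall>u\<in>UU. \<forall>a::real. normU (\<lambda>s. a *\<^sub>R u s) = \<bar>a\<bar> * normU u) \<and>
     (\<forall>u\<in>UU. \<forall>v\<in>UU. normU (\<lambda>s. u s + v s) \<le> normU u + normU v) \<and>
     \<comment> \<open>shift axiom\<close>
     (\<forall>u\<in>UU. \<forall>\<tau>\<in>TT. shift_inp TT u \<tau> \<in> UU \<and> normU (shift_inp TT u \<tau>) \<le> normU u) \<and>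
     \<comment> \<open>restriction axiom\<close>
     (\<forall>u\<in>UU. \<forall>t1 t2. 0 \<le> t1 \<and> t1 \<le> t2 \<longrightarrow>
         restr_inp TT u t1 t2 \<in> UU \<and> normU (restr_inp TT u t1 t2) \<le> normU u) \<and>
     \<comment> \<open>identity property\<close>
     (\<forall>x. \<forall>u\<in>UU. \<phi> 0 x u = x) \<and>
     \<comment> \<open>causality\<close>
     (\<forall>t\<in>TT. \<forall>x. \<forall>u\<in>UU. \<forall>v\<in>UU.
         (\<forall>s\<in>TT. s \<le> t \<longrightarrow> u s = v s) \<longrightarrow> \<phi> t x u = \<phi> t x v) \<and>
     \<comment> \<open>cocycle property\<close>
     (\<forall>t\<in>TT. \<forall>s\<in>TT. \<forall>x. \<forall>u\<in>UU.
         \<phi> (t + s) x u = \<phi> s (\<phi> t x u) (shift_inp TT u t))"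

definition out :: "(real \<Rightarrow> 'x \<Rightarrow> (real \<Rightarrow> 'u) \<Rightarrow> 'x) \<Rightarrow> ('x \<Rightarrow> 'u \<Rightarrow> 'y)
     \<Rightarrow> real \<Rightarrow> 'x \<Rightarrow> (real \<Rightarrow> 'u) \<Rightarrow> 'y" where
  "out \<phi> h t x u = h (\<phi> t x u) (u t)"

definition OCAG ::
  "real set \<Rightarrow> (real \<Rightarrow> 'u) set \<Rightarrow> ((real \<Rightarrow> 'u) \<Rightarrow> real)
   \<Rightarrow> (real \<Rightarrow> 'x::real_normed_vector \<Rightarrow> (real \<Rightarrow> 'u) \<Rightarrow> 'x) \<Rightarrow> ('x \<Rightarrow> 'u \<Rightarrow> 'y::real_normed_vector) \<Rightarrow> bool" where
  "OCAG TT UU normU \<phi> h \<longleftrightarrow> (\<exists>\<beta> \<gamma> (c::real). class_KL \<beta> \<and> class_Kinf \<gamma> \<and> c \<ge> 0 \<and>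
     (\<forall>x. \<forall>u\<in>UU. \<forall>t\<in>TT. norm (out \<phi> h t x u) \<le> \<beta> (norm x + c) t + \<gamma> (normU u)))"

definition OUGS ::
  "real set \<Rightarrow> (real \<Rightarrow> 'u) set \<Rightarrow> ((real \<Rightarrow> 'u) \<Rightarrow> real)
   \<Rightarrow> (real \<Rightarrow> 'x::real_normed_vector \<Rightarrow> (real \<Rightarrow> 'u) \<Rightarrow> 'x) \<Rightarrow> ('x \<Rightarrow> 'u \<Rightarrow> 'y::real_normed_vector) \<Rightarrow> bool" where
  "OUGS TT UU normU \<phi> h \<longleftrightarrow> (\<exists>\<sigma> \<gamma>. class_Kinf \<sigma> \<and> class_Kinf \<gamma> \<and>
     (\<forall>x. \<forall>u\<in>UU. \<forall>t\<in>TT. norm (out \<phi> h t x u) \<le> \<sigma> (norm x) + \<gamma> (normU u)))"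

definition IOS ::
  "real set \<Rightarrow> (real \<Rightarrow> 'u) set \<Rightarrow> ((real \<Rightarrow> 'u) \<Rightarrow> real)
   \<Rightarrow> (real \<Rightarrow> 'x::real_normed_vector \<Rightarrow> (real \<Rightarrow> 'u) \<Rightarrow> 'x) \<Rightarrow> ('x \<Rightarrow> 'u \<Rightarrow> 'y::real_normed_vector) \<Rightarrow> bool" where
  "IOS TT UU normU \<phi> h \<longleftrightarrow> (\<exists>\<beta> \<gamma>. class_KL \<beta> \<and> class_Kinf \<gamma> \<and>
     (\<forall>x. \<forall>u\<in>UU. \<forall>t\<in>TT. norm (out \<phi> h t x u) \<le> \<beta> (norm x) t + \<gamma> (normU u)))"

end

theory Submission
  imports Defs
begin

text \<open>The OCAG bound \<beta>(|x| + c, t) decays in t but need not vanish at x = 0, while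
  the OUGS bound \<sigma>(|x|) vanishes at x = 0 but does not decay. Their pointwise minimum
  min (\<sigma> r) (\<beta> (r + c) t) has both properties, hence is a KL function, and it bounds
  the output once both input gains are added up.\<close>

lemma class_K_nonneg:
  assumes "class_K g" "r \<ge> 0"
  shows "g r \<ge> 0"
proof (cases "r = 0")
  case True
  then show ?thesis using assms(1) unfolding class_K_def by simp
next
  case False
  have "strict_mono_on {0..} g" "g 0 = 0" using assms(1) unfolding class_K_def by auto
  moreover have "g 0 < g r"
    using strict_mono_onD[OF \<open>strict_mono_on {0..} g\<close>] False assms(2) by simp
  ultimately show ?thesis by simp
qed

lemma class_K_add:
  assumes "class_K f" "class_K g"
  shows "class_K (\<lambda>r. f r + g r)"
  unfolding class_K_def
proof (intro conjI)
  show "continuous_on {0..} (\<lambda>r. f r + g r)"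
    using assms unfolding class_K_def by (intro continuous_on_add) auto
  show "strict_mono_on {0..} (\<lambda>r. f r + g r)"
    using assms unfolding class_K_def strict_mono_on_def by (auto intro: add_strict_mono)
  show "f 0 + g 0 = 0" using assms unfolding class_K_def by simp
qed

lemma class_Kinf_add:
  assumes "class_Kinf f" "class_Kinf g"
  shows "class_Kinf (\<lambda>r. f r + g r)"
proof -
  have "\<exists>r\<ge>0. f r + g r > M" for M
  proof -
    obtain r where "r \<ge> 0" "f r > M" using assms(1) unfolding class_Kinf_def by blast
    moreover have "g r \<ge> 0" using assms(2) \<open>r \<ge> 0\<close> class_K_nonneg class_Kinf_def by blast
    ultimately show ?thesis by (intro exI[of _ r]) auto
  qed
  then show ?thesis
    using assms class_K_add unfolding class_Kinf_def by blast
qed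

lemma class_K_min:
  assumes "class_K f" "continuous_on {0..} g" "strict_mono_on {0..} g" "g 0 \<ge> 0"
  shows "class_K (\<lambda>r. min (f r) (g r))"
  unfolding class_K_def
proof (intro conjI)
  show "continuous_on {0..} (\<lambda>r. min (f r) (g r))"
    using assms(1,2) unfolding class_K_def by (intro continuous_on_min) auto
  show "strict_mono_on {0..} (\<lambda>r. min (f r) (g r))"
  proof (rule strict_mono_onI)
    fix r s :: real
    assume "r \<in> {0..}" "s \<in> {0..}" "r < s"
    then have "f r < f s" "g r < g s"
      using assms(1,3) unfolding class_K_def strict_mono_on_def by auto
    then show "min (f r) (g r) < min (f s) (g s)" by (simp add: min_def)
  qed
  show "min (f 0) (g 0) = 0" using assms(1,4) unfolding class_K_def by simp
qed

lemma class_K_shift: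
  assumes "class_K g" "c \<ge> 0"
  shows "continuous_on {0..} (\<lambda>r. g (r + c))" "strict_mono_on {0..} (\<lambda>r. g (r + c))"
proof -
  have cont: "continuous_on {0..} g" and mono: "strict_mono_on {0..} g"
    using assms(1) unfolding class_K_def by auto
  have "continuous_on {0..} (\<lambda>r::real. r + c)" by (intro continuous_intros)
  moreover have "(\<lambda>r. r + c) ` {0..} \<subseteq> {0..}" using assms(2) by auto
  ultimately show "continuous_on {0..} (\<lambda>r. g (r + c))"
    using continuous_on_compose2[OF cont] by blast
  show "strict_mono_on {0..} (\<lambda>r. g (r + c))"
    using mono assms(2) unfolding strict_mono_on_def by auto
qed

lemma class_KL_min_shift:
  assumes \<sigma>: "class_K \<sigma>" and \<beta>: "class_KL \<beta>" and c: "c \<ge> 0"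
  shows "class_KL (\<lambda>r t. min (\<sigma> r) (\<beta> (r + c) t))"
  unfolding class_KL_def
proof (intro conjI allI impI)
  fix t :: real
  assume "t \<ge> 0"
  then have \<beta>t: "class_K (\<lambda>r. \<beta> r t)" using \<beta> unfolding class_KL_def by auto
  show "class_K (\<lambda>r. min (\<sigma> r) (\<beta> (r + c) t))"
    using class_K_min[OF \<sigma> class_K_shift[OF \<beta>t c]] class_K_nonneg[OF \<beta>t c] by simp
next
  fix r :: real
  assume "r \<ge> 0"
  then have anti: "antimono_on {0..} (\<lambda>t. \<beta> (r + c) t)"
    and lim: "((\<lambda>t. \<beta> (r + c) t) \<longlongrightarrow> 0) at_top"
    using \<beta> c unfolding class_KL_def by auto
  show "antimono_on {0..} (\<lambda>t. min (\<sigma> r) (\<beta> (r + c) t))"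
    using anti unfolding monotone_on_def by (meson min.mono order_refl)
  have "((\<lambda>t. min (\<sigma> r) (\<beta> (r + c) t)) \<longlongrightarrow> min (\<sigma> r) 0) at_top"
    by (intro tendsto_min tendsto_const lim)
  then show "((\<lambda>t. min (\<sigma> r) (\<beta> (r + c) t)) \<longlongrightarrow> 0) at_top"
    using class_K_nonneg[OF \<sigma> \<open>r \<ge> 0\<close>] by (simp add: min_absorb2)
qed

lemma fc_control_system_normU_nonneg:
  assumes "fc_control_system TT UU normU \<phi>" "u \<in> UU"
  shows "normU u \<ge> 0"
proof -
  have "\<forall>u\<in>UU. normU u \<ge> 0"
    using assms(1) unfolding fc_control_system_def by (elim conjE) assumption
  with assms(2) show ?thesis by blast
qed

theorem lemma9:
  fixes TT :: "real set"
    and UU :: "(real \<Rightarrow> 'u::real_vector) set"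
    and normU :: "(real \<Rightarrow> 'u) \<Rightarrow> real"
    and \<phi> :: "real \<Rightarrow> 'x::real_normed_vector \<Rightarrow> (real \<Rightarrow> 'u) \<Rightarrow> 'x"
    and h :: "'x \<Rightarrow> 'u \<Rightarrow> 'y::real_normed_vector"
  assumes "fc_control_system TT UU normU \<phi>"
    and "OCAG TT UU normU \<phi> h"
    and "OUGS TT UU normU \<phi> h"
  shows "IOS TT UU normU \<phi> h"
proof -
  obtain \<beta> \<gamma>\<^sub>1 c where \<beta>: "class_KL \<beta>" and \<gamma>\<^sub>1: "class_Kinf \<gamma>\<^sub>1" and "c \<ge> 0"
    and ocag: "\<And>x u t. u \<in> UU \<Longrightarrow> t \<in> TT \<Longrightarrow>
      norm (out \<phi> h t x u) \<le> \<beta> (norm x + c) t + \<gamma>\<^sub>1 (normU u)"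
    using assms(2) unfolding OCAG_def by blast
  obtain \<sigma> \<gamma>\<^sub>2 where \<sigma>: "class_Kinf \<sigma>" and \<gamma>\<^sub>2: "class_Kinf \<gamma>\<^sub>2"
    and ougs: "\<And>x u t. u \<in> UU \<Longrightarrow> t \<in> TT \<Longrightarrow>
      norm (out \<phi> h t x u) \<le> \<sigma> (norm x) + \<gamma>\<^sub>2 (normU u)"
    using assms(3) unfolding OUGS_def by blast
  have "norm (out \<phi> h t x u)
      \<le> min (\<sigma> (norm x)) (\<beta> (norm x + c) t) + (\<gamma>\<^sub>1 (normU u) + \<gamma>\<^sub>2 (normU u))"
    if "u \<in> UU" "t \<in> TT" for x u t
  proof -
    have "normU u \<ge> 0" using fc_control_system_normU_nonneg[OF assms(1) \<open>u \<in> UU\<close>] .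
    then have "\<gamma>\<^sub>1 (normU u) \<ge> 0" "\<gamma>\<^sub>2 (normU u) \<ge> 0"
      using \<gamma>\<^sub>1 \<gamma>\<^sub>2 class_K_nonneg unfolding class_Kinf_def by blast+
    then show ?thesis using ocag[OF that, of x] ougs[OF that, of x] by linarith
  qed
  moreover have "class_KL (\<lambda>r t. min (\<sigma> r) (\<beta> (r + c) t))"
    using class_KL_min_shift \<sigma> \<beta> \<open>c \<ge> 0\<close> unfolding class_Kinf_def by blast
  ultimately show ?thesis
    unfolding IOS_def using class_Kinf_add[OF \<gamma>\<^sub>1 \<gamma>\<^sub>2] by blast
qed

end
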